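(* Let $G$ be a graph that has a canonical dominating set, let $D_s,D_t$ be dominating sets of $G$, and let $k=\max\{|D_s|,|D_t|\}$. Then $D_s\leftrightarrow_k D_t$ holds if and only if, for every $i\in\{s,t\}$ with $|D_i|=k$, the set $D_i$ is not a minimal dominating set.
   Context: All graphs are finite, simple and undirected. A set $D\subseteq V(G)$ is a dominating set if every vertex of $G$ is in $D$ or adjacent to a vertex of $D$; it is minimal if no proper subset $D\setminus\{w\}$, $w\in D$, is a dominating set. Two dominating sets $D,D'$ of $G$ are adjacent if $|D\triangle D'|=1$. For dominating sets $D_p,D_q$ and an integer $k>0$, write $D_p\leftrightarrow_k D_q$ if there is a sequence $D_0=D_p,D_1,\dots,D_\ell=D_q$ ($\ell\ge 0$) of dominating sets of $G$ with $D_{i-1},D_i$ adjacent for all $i\ge1$ and $|D_i|\le k$ for all $i$. A minimum dominating set $D^*$ of $G$ is called canonical if $D\leftrightarrow_{|D|+1} D^*$ holds for every dominating set $D$ of $G$. *)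

theory Defs
  imports Main
begin

definition graph :: "'a set \<Rightarrow> ('a \<Rightarrow> 'a \<Rightarrow> bool) \<Rightarrow> bool" where
  "graph V E \<longleftrightarrow> finite V \<and> (\<forall>x y. E x y \<longrightarrow> x \<in> V \<and> y \<in> V)
     \<and> (\<forall>x y. E x y \<longrightarrow> E y x) \<and> (\<forall>x. \<not> E x x)"

definition dominating :: "'a set \<Rightarrow> ('a \<Rightarrow> 'a \<Rightarrow> bool) \<Rightarrow> 'a set \<Rightarrow> bool" where
  "dominating V E D \<longleftrightarrow> D \<subseteq> V \<and> (\<forall>v\<in>V. v \<in> D \<or> (\<exists>u\<in>D. E v u))"

definition minimal_dominating :: "'a set \<Rightarrow> ('a \<Rightarrow> 'a \<Rightarrow> bool) \<Rightarrow> 'a set \<Rightarrow> bool" where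
  "minimal_dominating V E D \<longleftrightarrow> dominating V E D \<and> (\<forall>w\<in>D. \<not> dominating V E (D - {w}))"

definition minimum_dominating :: "'a set \<Rightarrow> ('a \<Rightarrow> 'a \<Rightarrow> bool) \<Rightarrow> 'a set \<Rightarrow> bool" where
  "minimum_dominating V E D \<longleftrightarrow> dominating V E D \<and>
     (\<forall>D'. dominating V E D' \<longrightarrow> card D \<le> card D')"

definition ds_adjacent :: "'a set \<Rightarrow> 'a set \<Rightarrow> bool" where
  "ds_adjacent D D' \<longleftrightarrow> card ((D - D') \<union> (D' - D)) = 1"

definition reconf :: "'a set \<Rightarrow> ('a \<Rightarrow> 'a \<Rightarrow> bool) \<Rightarrow> nat \<Rightarrow> 'a set \<Rightarrow> 'a set \<Rightarrow> bool" where
  "reconf V E k Dp Dq \<longleftrightarrow> 0 < k \<and>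
     (\<exists>(f :: nat \<Rightarrow> 'a set) (l :: nat). f 0 = Dp \<and> f l = Dq \<and>
        (\<forall>i\<le>l. dominating V E (f i) \<and> card (f i) \<le> k) \<and>
        (\<forall>i. 1 \<le> i \<and> i \<le> l \<longrightarrow> ds_adjacent (f (i - 1)) (f i)))"

definition canonical_dominating :: "'a set \<Rightarrow> ('a \<Rightarrow> 'a \<Rightarrow> bool) \<Rightarrow> 'a set \<Rightarrow> bool" where
  "canonical_dominating V E Dstar \<longleftrightarrow> minimum_dominating V E Dstar \<and>
     (\<forall>D. dominating V E D \<longrightarrow> reconf V E (card D + 1) D Dstar)"

end

theory Submission
  imports Defs
begin

text \<open>Under the size bound k, a minimal dominating set D of size k is frozen: removing a vertex
  destroys domination and adding one exceeds k, so D has no neighbour in the reconfiguration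
  graph. Conversely every other dominating set of size at most k reaches a canonical dominating
  set D* within the bound k: sets of size less than k do so by canonicity, and a non-minimal set
  of size k first drops a redundant vertex. Joining the routes of D_s and D_t through D* gives
  the reconfiguration sequence.\<close>

definition ds_move :: "'a set \<Rightarrow> ('a \<Rightarrow> 'a \<Rightarrow> bool) \<Rightarrow> nat \<Rightarrow> 'a set \<Rightarrow> 'a set \<Rightarrow> bool" where
  "ds_move V E k C D \<longleftrightarrow> ds_adjacent C D \<and>
     dominating V E C \<and> card C \<le> k \<and> dominating V E D \<and> card D \<le> k"

lemma reconf_iff_rtranclp:
  "reconf V E k A B \<longleftrightarrow>
     0 < k \<and> dominating V E A \<and> card A \<le> k \<and> (ds_move V E k)\<^sup>*\<^sup>* A B"
proof
  assume "reconf V E k A B"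
  then obtain f :: "nat \<Rightarrow> _" and l where k: "0 < k" and f: "f 0 = A" "f l = B"
    and feasible: "\<forall>i\<le>l. dominating V E (f i) \<and> card (f i) \<le> k"
    and adjacent: "\<forall>i. 1 \<le> i \<and> i \<le> l \<longrightarrow> ds_adjacent (f (i - 1)) (f i)"
    unfolding reconf_def by blast
  have "(ds_move V E k)\<^sup>*\<^sup>* (f 0) (f j)" if "j \<le> l" for j
    using that
  proof (induction j)
    case (Suc j)
    then have "ds_move V E k (f j) (f (Suc j))"
      using feasible adjacent[rule_format, of "Suc j"] by (simp add: ds_move_def)
    with Suc show ?case by (simp add: rtranclp.rtrancl_into_rtrancl)
  qed simp
  then show "0 < k \<and> dominating V E A \<and> card A \<le> k \<and> (ds_move V E k)\<^sup>*\<^sup>* A B"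
    using k f feasible by auto
next
  assume "0 < k \<and> dominating V E A \<and> card A \<le> k \<and> (ds_move V E k)\<^sup>*\<^sup>* A B"
  then have k: "0 < k" and A: "dominating V E A" "card A \<le> k"
    and path: "(ds_move V E k)\<^sup>*\<^sup>* A B" by auto
  from path show "reconf V E k A B"
  proof (induction rule: rtranclp_induct)
    case base
    show ?case unfolding reconf_def using k A
      by (intro conjI exI[of _ "\<lambda>_. A"] exI[of _ 0]) auto
  next
    case (step B C)
    then obtain f :: "nat \<Rightarrow> _" and l where f: "f 0 = A" "f l = B"
      "\<forall>i\<le>l. dominating V E (f i) \<and> card (f i) \<le> k"
      "\<forall>i. 1 \<le> i \<and> i \<le> l \<longrightarrow> ds_adjacent (f (i - 1)) (f i)"
      unfolding reconf_def by blast
    let ?g = "f(Suc l := C)"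
    have "\<forall>i. 1 \<le> i \<and> i \<le> Suc l \<longrightarrow> ds_adjacent (?g (i - 1)) (?g i)"
      using f(2,4) step.hyps(2) by (auto simp: ds_move_def le_Suc_eq)
    moreover have "\<forall>i\<le>Suc l. dominating V E (?g i) \<and> card (?g i) \<le> k"
      using f(3) step.hyps(2) by (auto simp: ds_move_def le_Suc_eq)
    ultimately show ?case unfolding reconf_def using k f(1)
      by (intro conjI exI[of _ ?g] exI[of _ "Suc l"]) auto
  qed
qed

lemma symp_ds_move: "symp (ds_move V E k)"
  by (auto intro: sympI simp: ds_move_def ds_adjacent_def Un_commute)

lemma rtranclp_ds_move_dominating:
  assumes "(ds_move V E k)\<^sup>*\<^sup>* A B" "dominating V E A" "card A \<le> k"
  shows "dominating V E B \<and> card B \<le> k"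
  using assms by (induction rule: rtranclp_induct) (auto simp: ds_move_def)

lemma reconf_sym:
  assumes "reconf V E k A B"
  shows "reconf V E k B A"
proof -
  from assms have k: "0 < k" and A: "dominating V E A" "card A \<le> k"
    and path: "(ds_move V E k)\<^sup>*\<^sup>* A B"
    unfolding reconf_iff_rtranclp by auto
  have "(ds_move V E k)\<^sup>*\<^sup>* B A"
    using sympD[OF symp_rtranclp[OF symp_ds_move] path] .
  with k rtranclp_ds_move_dominating[OF path A] show ?thesis
    unfolding reconf_iff_rtranclp by simp
qed

lemma reconf_trans: "reconf V E k A B \<Longrightarrow> reconf V E k B C \<Longrightarrow> reconf V E k A C"
  unfolding reconf_iff_rtranclp by (meson rtranclp_trans)

lemma reconf_mono:
  assumes "reconf V E k A B" "k \<le> k'"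
  shows "reconf V E k' A B"
proof -
  have "ds_move V E k \<le> ds_move V E k'"
    using assms(2) by (auto simp: ds_move_def)
  then show ?thesis
    using assms unfolding reconf_iff_rtranclp by (auto dest: rtranclp_mono)
qed

lemma ds_adjacent_Diff_singleton: "x \<in> A \<Longrightarrow> ds_adjacent A (A - {x})"
proof -
  assume "x \<in> A"
  then have "(A - (A - {x})) \<union> ((A - {x}) - A) = {x}" by blast
  then show ?thesis unfolding ds_adjacent_def by simp
qed

lemma ds_adjacent_cases:
  assumes "ds_adjacent A C"
  obtains x where "x \<in> A" "C = A - {x}" | x where "x \<notin> A" "C = insert x A"
proof -
  have "card ((A - C) \<union> (C - A)) = Suc 0"
    using assms unfolding ds_adjacent_def by simp
  then obtain x where "(A - C) \<union> (C - A) = {x}"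
    unfolding card_1_singleton_iff by blast
  then have mem: "y \<in> C \<longleftrightarrow> (y \<in> A \<longleftrightarrow> y \<noteq> x)" for y
    by (auto simp: set_eq_iff)
  show ?thesis
  proof (cases "x \<in> A")
    case True
    then have "C = A - {x}" using mem by blast
    with True show ?thesis by (rule that(1))
  next
    case False
    then have "C = insert x A" using mem by blast
    with False show ?thesis by (rule that(2))
  qed
qed

lemma dominating_finite: "graph V E \<Longrightarrow> dominating V E D \<Longrightarrow> finite D"
  unfolding graph_def dominating_def by (meson finite_subset)

lemma reconf_minimal_dominating_eq:
  assumes "graph V E" "minimal_dominating V E A" "card A = k" "reconf V E k A B"
  shows "B = A"
proof -
  have "(ds_move V E k)\<^sup>*\<^sup>* A B" using assms(4) by (simp add: reconf_iff_rtranclp)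
  then show "B = A"
  proof (cases rule: converse_rtranclpE)
    case (step C)
    then have "ds_adjacent A C" "dominating V E C" "card C \<le> k"
      by (auto simp: ds_move_def)
    moreover have "finite A"
      using assms(1,2) dominating_finite unfolding minimal_dominating_def by blast
    ultimately show ?thesis
      using assms(2,3) unfolding minimal_dominating_def
      by (cases rule: ds_adjacent_cases) auto
  qed simp
qed

lemma reconf_to_canonical:
  assumes "graph V E" "canonical_dominating V E S" "dominating V E A"
    "card A \<le> k" "0 < k" "card A = k \<longrightarrow> \<not> minimal_dominating V E A"
  shows "reconf V E k A S"
proof (cases "card A < k")
  case True
  have "reconf V E (card A + 1) A S"
    using assms(2,3) unfolding canonical_dominating_def by blast
  with True show ?thesis by (simp add: reconf_mono)
next
  case False
  then have "card A = k" using assms(4) by simp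
  then obtain w where w: "w \<in> A" "dominating V E (A - {w})"
    using assms(3,6) unfolding minimal_dominating_def by blast
  have card_w: "card (A - {w}) + 1 = k"
    using w \<open>card A = k\<close> assms(5) dominating_finite[OF assms(1,3)] by simp
  have "ds_move V E k A (A - {w})"
    using w assms(3,4) card_w ds_adjacent_Diff_singleton by (auto simp: ds_move_def)
  then have "reconf V E k A (A - {w})"
    using assms(3-5) by (simp add: reconf_iff_rtranclp)
  moreover have "reconf V E k (A - {w}) S"
    using assms(2) w(2) card_w unfolding canonical_dominating_def by metis
  ultimately show ?thesis by (rule reconf_trans)
qed

theorem lemma2:
  fixes V :: "'a set" and E :: "'a \<Rightarrow> 'a \<Rightarrow> bool" and Ds Dt :: "'a set"
  assumes "graph V E"
    and "\<exists>Dstar. canonical_dominating V E Dstar"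
    and "dominating V E Ds" and "dominating V E Dt"
    and "Ds \<noteq> Dt"
  shows "reconf V E (max (card Ds) (card Dt)) Ds Dt \<longleftrightarrow>
    ((card Ds = max (card Ds) (card Dt) \<longrightarrow> \<not> minimal_dominating V E Ds) \<and>
     (card Dt = max (card Ds) (card Dt) \<longrightarrow> \<not> minimal_dominating V E Dt))"
    (is "reconf V E ?k Ds Dt \<longleftrightarrow> ?unfrozen Ds \<and> ?unfrozen Dt")
proof
  assume "reconf V E ?k Ds Dt"
  then have "reconf V E ?k Dt Ds" by (rule reconf_sym)
  with \<open>reconf V E ?k Ds Dt\<close> show "?unfrozen Ds \<and> ?unfrozen Dt"
    using reconf_minimal_dominating_eq[OF assms(1)] assms(5) by blast
next
  assume unfrozen: "?unfrozen Ds \<and> ?unfrozen Dt"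
  obtain S where S: "canonical_dominating V E S" using assms(2) by blast
  have "0 < ?k"
    using assms(5) dominating_finite[OF assms(1)] assms(3,4) by fastforce
  then have "reconf V E ?k Ds S" "reconf V E ?k Dt S"
    using reconf_to_canonical[OF assms(1) S] assms(3,4) unfrozen by auto
  then show "reconf V E ?k Ds Dt" by (blast intro: reconf_sym reconf_trans)
qed

end
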